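(* Let $\tau$ be a topology on $\mathbb{R}$ such that $\tau_e\subset\tau$, every nonempty $\tau$-open set has the Baire property and is non-meager, and $\tau_\ast\subset\tau$. Then the class of $\tau_\ast$-Świątkowski functions coincides with the class of $\tau$-Świątkowski functions.
   Context: $\tau_e$ is the Euclidean topology; meagerness and the Baire property refer to $\tau_e$. $\tau_\ast=\{U\setminus M: U\in\tau_e,\ M\text{ meager}\}$. For a topology $\sigma$ and $f\colon\mathbb{R}\to\mathbb{R}$, $\mathrm{C}_\sigma(f)$ is the set of points at which $f\colon(\mathbb{R},\sigma)\to(\mathbb{R},\tau_e)$ is continuous, and $f$ is a $\sigma$-Świątkowski function if for all $a,b$ with $f(a)<f(b)$ there exists $x\in\mathrm{C}_\sigma(f)$ strictly between $a$ and $b$ with $f(a)<f(x)<f(b)$. *)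

theory Defs
  imports "HOL-Analysis.Analysis"
begin

definition nowhere_dense :: "real set \<Rightarrow> bool" where
  "nowhere_dense A \<longleftrightarrow> interior (closure A) = {}"

definition meager :: "real set \<Rightarrow> bool" where
  "meager M \<longleftrightarrow> (\<exists>N :: nat \<Rightarrow> real set. (\<forall>n. nowhere_dense (N n)) \<and> M \<subseteq> (\<Union>n. N n))"

definition baire_property :: "real set \<Rightarrow> bool" where
  "baire_property A \<longleftrightarrow> (\<exists>U. open U \<and> meager ((A - U) \<union> (U - A)))"

definition tau_star_open :: "real set \<Rightarrow> bool" where
  "tau_star_open S \<longleftrightarrow> (\<exists>U M. open U \<and> meager M \<and> S = U - M)"

definition cont_points :: "(real set \<Rightarrow> bool) \<Rightarrow> (real \<Rightarrow> real) \<Rightarrow> real set" where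
  "cont_points opn f = {x. \<forall>V. open V \<and> f x \<in> V \<longrightarrow> (\<exists>U. opn U \<and> x \<in> U \<and> f ` U \<subseteq> V)}"

definition swiatkowski :: "(real set \<Rightarrow> bool) \<Rightarrow> (real \<Rightarrow> real) \<Rightarrow> bool" where
  "swiatkowski opn f \<longleftrightarrow>
     (\<forall>a b. f a < f b \<longrightarrow>
        (\<exists>x \<in> cont_points opn f. min a b < x \<and> x < max a b \<and> f a < f x \<and> f x < f b))"

end

theory Submission
  imports Defs
begin

text \<open>
  Enlarging the topology only adds continuity points, so every \<open>\<tau>*\<close>-Swiatkowski function is
  \<open>\<tau>\<close>-Swiatkowski. Conversely, let \<open>f\<close> be \<open>\<tau>\<close>-Swiatkowski. In every interval either \<open>f\<close> is
  constant, or it has a \<open>\<tau>\<close>-continuity point \<open>x\<close>; a \<open>\<tau>\<close>-neighbourhood of \<open>x\<close> mapped into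
  \<open>B(f x, \<epsilon>)\<close> differs from a Euclidean open set by a meager set. So the rational intervals on
  which \<open>f\<close> lies within \<open>\<epsilon>\<close> of a constant outside a meager set are dense, and off a meager
  set every point has, for all \<open>\<epsilon>\<close>, such a neighbourhood: there \<open>f\<close> is \<open>\<tau>*\<close>-continuous.
  Since nonempty \<open>\<tau>\<close>-open sets are non-meager, the \<open>\<tau>\<close>-neighbourhood supplied by the
  \<open>\<tau>\<close>-Swiatkowski property contains such a point.
\<close>

lemma meager_iff_countable_cover:
  "meager M \<longleftrightarrow> (\<exists>NN. countable NN \<and> (\<forall>N\<in>NN. nowhere_dense N) \<and> M \<subseteq> \<Union>NN)"
proof
  assume "meager M"
  then obtain N :: "nat \<Rightarrow> real set" where "\<forall>n. nowhere_dense (N n)" "M \<subseteq> (\<Union>n. N n)"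
    unfolding meager_def by blast
  then show "\<exists>NN. countable NN \<and> (\<forall>N\<in>NN. nowhere_dense N) \<and> M \<subseteq> \<Union>NN"
    by (intro exI[of _ "range N"]) auto
next
  assume "\<exists>NN. countable NN \<and> (\<forall>N\<in>NN. nowhere_dense N) \<and> M \<subseteq> \<Union>NN"
  then obtain NN where NN: "countable NN" "\<forall>N\<in>NN. nowhere_dense N" "M \<subseteq> \<Union>NN"
    by blast
  define N where "N = from_nat_into (insert {} NN)"
  have "range N = insert {} NN"
    using NN(1) by (simp add: N_def range_from_nat_into)
  moreover have "nowhere_dense {}"
    by (simp add: nowhere_dense_def)
  ultimately have "nowhere_dense (N n)" for n
    using NN(2) by (metis insert_iff rangeI)
  moreover have "M \<subseteq> (\<Union>n. N n)"
    using NN(3) \<open>range N = insert {} NN\<close> by auto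
  ultimately show "meager M"
    unfolding meager_def by blast
qed

lemma meager_subset: "meager B \<Longrightarrow> A \<subseteq> B \<Longrightarrow> meager A"
  unfolding meager_def by blast

lemma nowhere_dense_imp_meager: "nowhere_dense A \<Longrightarrow> meager A"
  unfolding meager_def by (rule exI[of _ "\<lambda>n. A"]) auto

lemma meager_empty: "meager {}"
  by (rule nowhere_dense_imp_meager) (simp add: nowhere_dense_def)

lemma meager_UN:
  assumes "countable I" and "\<And>i. i \<in> I \<Longrightarrow> meager (F i)"
  shows "meager (\<Union>i\<in>I. F i)"
proof -
  obtain NN where NN: "\<And>i. i \<in> I \<Longrightarrow>
      countable (NN i) \<and> (\<forall>N\<in>NN i. nowhere_dense N) \<and> F i \<subseteq> \<Union>(NN i)"
    using assms(2) unfolding meager_iff_countable_cover by metis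
  have "countable (\<Union>i\<in>I. NN i)"
    using assms(1) NN by (simp add: countable_UN)
  moreover have "\<forall>N\<in>(\<Union>i\<in>I. NN i). nowhere_dense N"
    using NN by blast
  moreover have "(\<Union>i\<in>I. F i) \<subseteq> \<Union>(\<Union>i\<in>I. NN i)"
  proof (rule UN_least)
    fix i assume "i \<in> I"
    with NN[OF this] show "F i \<subseteq> \<Union>(\<Union>i\<in>I. NN i)"
      by blast
  qed
  ultimately show ?thesis
    unfolding meager_iff_countable_cover by blast
qed

lemma meager_Un: "meager A \<Longrightarrow> meager B \<Longrightarrow> meager (A \<union> B)"
  using meager_UN[of "{A, B}" id] by auto

lemma nowhere_dense_compl_dense_open:
  assumes "open G" and dense: "\<And>p q. p < q \<Longrightarrow> {p<..<q} \<inter> G \<noteq> {}"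
  shows "nowhere_dense (- G)"
proof -
  have "x \<in> closure G" for x
    unfolding closure_approachable
  proof (intro allI impI)
    fix e :: real assume "e > 0"
    then obtain y where "y \<in> G" "x - e < y" "y < x + e"
      using dense[of "x - e" "x + e"] by auto
    then show "\<exists>y\<in>G. dist y x < e"
      by (intro bexI[of _ y]) (auto simp: dist_real_def)
  qed
  then have "closure G = UNIV"
    by blast
  then show ?thesis
    using \<open>open G\<close> by (simp add: nowhere_dense_def closed_open interior_complement)
qed

lemma cont_points_mono:
  "(\<And>S. opn S \<Longrightarrow> opn' S) \<Longrightarrow> cont_points opn f \<subseteq> cont_points opn' f"
  unfolding cont_points_def by blast

lemma swiatkowski_mono:
  "(\<And>S. opn S \<Longrightarrow> opn' S) \<Longrightarrow> swiatkowski opn f \<Longrightarrow> swiatkowski opn' f"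
  unfolding swiatkowski_def using cont_points_mono by (metis subsetD)

definition rat_intervals :: "real set set" where
  "rat_intervals = {{p<..<q} | p q. p \<in> \<rat> \<and> q \<in> \<rat>}"

lemma countable_rat_intervals: "countable rat_intervals"
proof -
  have "rat_intervals = (\<lambda>(p, q). {p<..<q}) ` (\<rat> \<times> \<rat>)"
    unfolding rat_intervals_def by fast
  moreover have "countable (\<rat> \<times> \<rat>)"
    by (intro countable_SIGMA countable_rat)
  ultimately show ?thesis
    by (metis countable_image)
qed

lemma open_contains_rat_interval:
  fixes W :: "real set"
  assumes "open W" and "w \<in> W"
  shows "\<exists>p q. p \<in> \<rat> \<and> q \<in> \<rat> \<and> p < q \<and> {p<..<q} \<subseteq> W"
proof -
  obtain r where r: "r > 0" "ball w r \<subseteq> W"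
    using assms open_contains_ball by blast
  obtain p where p: "p \<in> \<rat>" "w - r < p" "p < w"
    using Rats_dense_in_real[of "w - r" w] r(1) by auto
  obtain q where q: "q \<in> \<rat>" "w < q" "q < w + r"
    using Rats_dense_in_real[of w "w + r"] r(1) by auto
  have "{p<..<q} \<subseteq> ball w r"
    using p q by (auto simp: ball_eq_greaterThanLessThan)
  then show ?thesis
    using p q r(2) by (intro exI[of _ p] exI[of _ q]) auto
qed

definition essentially_near_const :: "(real \<Rightarrow> real) \<Rightarrow> real \<Rightarrow> real set \<Rightarrow> bool" where
  "essentially_near_const f e J \<longleftrightarrow> (\<exists>c. meager (J - f -` ball c e))"

lemma essentially_near_const_subset:
  "essentially_near_const f e J \<Longrightarrow> J' \<subseteq> J \<Longrightarrow> essentially_near_const f e J'"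
  unfolding essentially_near_const_def by (meson Diff_mono meager_subset order_refl)

lemma exists_open_essentially_near_const_at_cont_point:
  fixes T :: "real topology"
  assumes op: "\<And>U. open U \<Longrightarrow> openin T U"
    and bp: "\<And>S. openin T S \<Longrightarrow> S \<noteq> {} \<Longrightarrow> baire_property S"
    and nm: "\<And>S. openin T S \<Longrightarrow> S \<noteq> {} \<Longrightarrow> \<not> meager S"
    and x: "x \<in> cont_points (openin T) f" "x \<in> G" and "open G" and "e > 0"
  shows "\<exists>W. open W \<and> W \<noteq> {} \<and> W \<subseteq> G \<and> essentially_near_const f e W"
proof -
  obtain S where S: "openin T S" "x \<in> S" "f ` S \<subseteq> ball (f x) e"
    using x(1) \<open>e > 0\<close> unfolding cont_points_def by (auto dest!: spec[of _ "ball (f x) e"])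
  let ?S = "S \<inter> G"
  have "openin T ?S" "?S \<noteq> {}"
    using S(1,2) x(2) op \<open>open G\<close> by (auto intro: openin_Int)
  then obtain U where U: "open U" "meager ((?S - U) \<union> (U - ?S))" "\<not> meager ?S"
    using bp nm unfolding baire_property_def by blast
  have "U \<inter> G \<noteq> {}"
  proof
    assume "U \<inter> G = {}"
    then have "?S \<subseteq> (?S - U) \<union> (U - ?S)"
      by blast
    then show False
      using U(2,3) meager_subset by blast
  qed
  moreover have "(U \<inter> G) - f -` ball (f x) e \<subseteq> (?S - U) \<union> (U - ?S)"
    using S(3) by auto
  then have "essentially_near_const f e (U \<inter> G)"
    unfolding essentially_near_const_def using U(2) meager_subset by blast
  ultimately show ?thesis
    using U(1) \<open>open G\<close> by (intro exI[of _ "U \<inter> G"]) auto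
qed

lemma exists_open_essentially_near_const_if_swiatkowski:
  fixes T :: "real topology"
  assumes op: "\<And>U. open U \<Longrightarrow> openin T U"
    and bp: "\<And>S. openin T S \<Longrightarrow> S \<noteq> {} \<Longrightarrow> baire_property S"
    and nm: "\<And>S. openin T S \<Longrightarrow> S \<noteq> {} \<Longrightarrow> \<not> meager S"
    and sw: "swiatkowski (openin T) f" and "e > 0" and "p < q"
  shows "\<exists>W. open W \<and> W \<noteq> {} \<and> W \<subseteq> {p<..<q} \<and> essentially_near_const f e W"
proof (cases "\<exists>u\<in>{p<..<q}. \<exists>v\<in>{p<..<q}. f u < f v")
  case True
  then obtain u v where "u \<in> {p<..<q}" "v \<in> {p<..<q}" "f u < f v"
    by blast
  then obtain x where "x \<in> cont_points (openin T) f" "min u v < x" "x < max u v"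
    using sw unfolding swiatkowski_def by blast
  moreover from this \<open>u \<in> {p<..<q}\<close> \<open>v \<in> {p<..<q}\<close> have "x \<in> {p<..<q}"
    by (auto simp: min_def max_def split: if_splits)
  ultimately show ?thesis
    using exists_open_essentially_near_const_at_cont_point[OF op bp nm, of x f "{p<..<q}"]
      \<open>e > 0\<close> by auto
next
  case False
  define y where "y = (p + q) / 2"
  have "y \<in> {p<..<q}"
    using \<open>p < q\<close> by (simp add: y_def)
  have "{p<..<q} \<subseteq> f -` ball (f y) e"
  proof
    fix u assume "u \<in> {p<..<q}"
    with False \<open>y \<in> {p<..<q}\<close> have "f u = f y"
      by (meson not_less order.antisym)
    with \<open>e > 0\<close> show "u \<in> f -` ball (f y) e"
      by simp
  qed
  then have "{p<..<q} - f -` ball (f y) e = {}"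
    by blast
  then have "essentially_near_const f e {p<..<q}"
    unfolding essentially_near_const_def by (metis meager_empty)
  then show ?thesis
    using \<open>p < q\<close> by (intro exI[of _ "{p<..<q}"]) auto
qed

lemma nowhere_dense_compl_essentially_near_const_rat_intervals:
  assumes "\<And>p q. p < q \<Longrightarrow>
      \<exists>W. open W \<and> W \<noteq> {} \<and> W \<subseteq> {p<..<q} \<and> essentially_near_const f e W"
  shows "nowhere_dense (- \<Union>{J \<in> rat_intervals. essentially_near_const f e J})"
proof (rule nowhere_dense_compl_dense_open)
  show "open (\<Union>{J \<in> rat_intervals. essentially_near_const f e J})"
    unfolding rat_intervals_def by auto
next
  fix p q :: real assume "p < q"
  then obtain W w where W: "open W" "w \<in> W" "W \<subseteq> {p<..<q}" "essentially_near_const f e W"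
    using assms by blast
  then obtain p' q' where pq': "p' \<in> \<rat>" "q' \<in> \<rat>" "p' < q'" "{p'<..<q'} \<subseteq> W"
    using open_contains_rat_interval[OF W(1,2)] by blast
  have "{p'<..<q'} \<in> rat_intervals"
    unfolding rat_intervals_def using pq'(1,2) by blast
  then have "{p'<..<q'} \<in> {J \<in> rat_intervals. essentially_near_const f e J}"
    using essentially_near_const_subset[OF W(4) pq'(4)] by blast
  moreover have "{p'<..<q'} \<noteq> {}" "{p'<..<q'} \<subseteq> {p<..<q}"
    using pq' W(3) by auto
  ultimately show "{p<..<q} \<inter> \<Union>{J \<in> rat_intervals. essentially_near_const f e J} \<noteq> {}"
    by blast
qed

lemma in_cont_points_tau_starI:
  assumes "\<And>e. e > 0 \<Longrightarrow>
      \<exists>J c. open J \<and> y \<in> J \<and> dist c (f y) < e \<and> meager (J - f -` ball c e)"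
  shows "y \<in> cont_points tau_star_open f"
  unfolding cont_points_def
proof (intro CollectI allI impI)
  fix V assume "open V \<and> f y \<in> V"
  then obtain \<epsilon> where "\<epsilon> > 0" "ball (f y) \<epsilon> \<subseteq> V"
    using open_contains_ball by blast
  obtain J c where J: "open J" "y \<in> J" "dist c (f y) < \<epsilon> / 2"
      "meager (J - f -` ball c (\<epsilon> / 2))"
    using assms[of "\<epsilon> / 2"] \<open>\<epsilon> > 0\<close> by auto
  let ?U = "J - (J - f -` ball c (\<epsilon> / 2))"
  have "ball c (\<epsilon> / 2) \<subseteq> ball (f y) \<epsilon>"
    unfolding subset_iff mem_ball using J(3) by (metis dist_commute dist_triangle_half_r)
  then have "f ` ?U \<subseteq> V"
    using \<open>ball (f y) \<epsilon> \<subseteq> V\<close> by auto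
  moreover have "tau_star_open ?U"
    unfolding tau_star_open_def using J(1,4) by blast
  moreover have "y \<in> ?U"
    using J(2,3) by (simp add: dist_commute)
  ultimately show "\<exists>U. tau_star_open U \<and> y \<in> U \<and> f ` U \<subseteq> V"
    by blast
qed

lemma meager_compl_cont_points_tau_star:
  assumes dense: "\<And>e p q. e > 0 \<Longrightarrow> p < q \<Longrightarrow>
      \<exists>W. open W \<and> W \<noteq> {} \<and> W \<subseteq> {p<..<q} \<and> essentially_near_const f e W"
  shows "meager (- cont_points tau_star_open f)"
proof -
  define r where "r n = 1 / real (Suc n)" for n
  define JJ where "JJ n = {J \<in> rat_intervals. essentially_near_const f (r n) J}" for n
  define c where "c n J = (SOME c. meager (J - f -` ball c (r n)))" for n J
  define B where "B n = - \<Union>(JJ n) \<union> (\<Union>J\<in>JJ n. J - f -` ball (c n J) (r n))" for n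
  have c: "meager (J - f -` ball (c n J) (r n))" if "J \<in> JJ n" for n J
    using that unfolding JJ_def c_def essentially_near_const_def by (auto intro: someI_ex)
  have "meager (B n)" for n
  proof -
    have "countable (JJ n)"
      unfolding JJ_def by (rule countable_subset[OF _ countable_rat_intervals]) blast
    moreover have "nowhere_dense (- \<Union>(JJ n))"
      unfolding JJ_def by (rule nowhere_dense_compl_essentially_near_const_rat_intervals)
        (use dense r_def in simp)
    ultimately show ?thesis
      unfolding B_def using c by (intro meager_Un meager_UN) (auto intro: nowhere_dense_imp_meager)
  qed
  then have "meager (\<Union>n. B n)"
    by (simp add: meager_UN)
  have "y \<in> cont_points tau_star_open f" if "y \<notin> (\<Union>n. B n)" for y
  proof (rule in_cont_points_tau_starI)
    fix e :: real assume "e > 0"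
    then obtain n where "r n < e"
      using reals_Archimedean by (auto simp: r_def inverse_eq_divide)
    moreover obtain J where J: "J \<in> JJ n" "y \<in> J" "y \<in> f -` ball (c n J) (r n)"
      using \<open>y \<notin> (\<Union>n. B n)\<close> unfolding B_def by blast
    moreover have "J - f -` ball (c n J) e \<subseteq> J - f -` ball (c n J) (r n)"
      using \<open>r n < e\<close> by auto
    ultimately show "\<exists>J c. open J \<and> y \<in> J \<and> dist c (f y) < e \<and> meager (J - f -` ball c e)"
      using c[OF J(1)] meager_subset unfolding JJ_def rat_intervals_def
      by (intro exI[of _ J] exI[of _ "c n J"]) auto
  qed
  then have "- cont_points tau_star_open f \<subseteq> (\<Union>n. B n)"
    by blast
  with \<open>meager (\<Union>n. B n)\<close> show ?thesis
    by (rule meager_subset)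
qed

lemma swiatkowski_if_meager_compl_cont_points:
  fixes T :: "real topology"
  assumes op: "\<And>U. open U \<Longrightarrow> openin T U"
    and nm: "\<And>S. openin T S \<Longrightarrow> S \<noteq> {} \<Longrightarrow> \<not> meager S"
    and sw: "swiatkowski (openin T) f"
    and "meager (- cont_points opn f)"
  shows "swiatkowski opn f"
  unfolding swiatkowski_def
proof (intro allI impI)
  fix a b assume "f a < f b"
  then obtain x where x: "x \<in> cont_points (openin T) f" "min a b < x" "x < max a b"
      "f a < f x" "f x < f b"
    using sw unfolding swiatkowski_def by blast
  then obtain S where S: "openin T S" "x \<in> S" "f ` S \<subseteq> {f a<..<f b}"
    unfolding cont_points_def by (auto dest!: spec[of _ "{f a<..<f b}"])
  let ?S = "S \<inter> {min a b<..<max a b}"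
  have "openin T ?S"
    using S(1) op by (simp add: openin_Int)
  moreover have "?S \<noteq> {}"
    using S(2) x(2,3) by auto
  ultimately have "\<not> ?S \<subseteq> - cont_points opn f"
    using nm meager_subset[OF \<open>meager (- cont_points opn f)\<close>, of ?S] by metis
  then obtain y where "y \<in> S" "min a b < y" "y < max a b" "y \<in> cont_points opn f"
    by auto
  moreover from \<open>y \<in> S\<close> S(3) have "f a < f y" "f y < f b"
    by auto
  ultimately show "\<exists>y\<in>cont_points opn f. min a b < y \<and> y < max a b \<and> f a < f y \<and> f y < f b"
    by blast
qed

theorem mainTheorem15:
  fixes T :: "real topology"
  assumes "\<forall>U. open U \<longrightarrow> openin T U"
    and "\<forall>S. openin T S \<and> S \<noteq> {} \<longrightarrow> baire_property S \<and> \<not> meager S"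
    and "\<forall>S. tau_star_open S \<longrightarrow> openin T S"
  shows "\<forall>f. swiatkowski tau_star_open f \<longleftrightarrow> swiatkowski (openin T) f"
proof (intro allI iffI)
  fix f
  show "swiatkowski tau_star_open f \<Longrightarrow> swiatkowski (openin T) f"
    using swiatkowski_mono assms(3) by blast
  assume sw: "swiatkowski (openin T) f"
  have op: "\<And>U. open U \<Longrightarrow> openin T U"
    and bp: "\<And>S. openin T S \<Longrightarrow> S \<noteq> {} \<Longrightarrow> baire_property S"
    and nm: "\<And>S. openin T S \<Longrightarrow> S \<noteq> {} \<Longrightarrow> \<not> meager S"
    using assms(1,2) by blast+
  have meager_discont: "meager (- cont_points tau_star_open f)"
    using exists_open_essentially_near_const_if_swiatkowski[OF op bp nm sw]
    by (rule meager_compl_cont_points_tau_star)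
  show "swiatkowski tau_star_open f"
    by (rule swiatkowski_if_meager_compl_cont_points[OF op nm sw meager_discont])
qed

end
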